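(* In the setting of the context, for any $n\ge N_p$ and $x\ge1$, letting $r_0=n^\eta+2\big(R+\frac{\exp(2\beta R)-1}{2\beta}\big)(K-1)(3+A(n))$, it holds that $$\mathbb{P}[n\bar\rho_n-n\mu^*\ge r_0x]\le\frac{\theta}{x^\xi}+\frac{2(K-1)}{(\alpha-1)\big((1+A(n))x\big)^{\alpha-1}},$$ $$\mathbb{P}[n\bar\rho_n-n\mu^*\le -r_0x]\le\frac{\theta}{x^\xi}+\frac{2(K-1)}{(\alpha-1)\big((1+A(n))x\big)^{\alpha-1}}.$$
   Context: Bandit with $K$ arms; for each arm $i$ a sequence of (possibly non-stationary) random costs $(x_{i,t})_{t\ge1}$ in $[-R,R]$, $x_{i,t}$ being the cost at the $t$-th pull of arm $i$. Fix $\beta>0$, $\hat\rho_{i,n}=\frac1\beta\ln(\frac1n\sum_{t=1}^n e^{\beta x_{i,t}})$, $\mu_{i,n}=\mathbb{E}[\hat\rho_{i,n}]$. Assumption: for every $i$, $\lim_n\mu_{i,n}=\mu_i$ exists and for all $z\ge1$, $n\in\mathbb{N}$: $\mathbb{P}[n\hat\rho_{i,n}-n\mu_i\ge n^\eta z]\le\theta/z^\xi$ and $\mathbb{P}[n\hat\rho_{i,n}-n\mu_i\le -n^\eta z]\le\theta/z^\xi$, with $\xi>1$, $1/2\le\eta<1$, and $\theta>1$ large enough that $2\theta^{1/\xi}/\Delta_{\min}>1$. There is a unique arm $i^*$ attaining $\mu^*=\min_i\mu_i$; $\Delta_i=\mu_i-\mu^*$, $\Delta_{\min}=\min_{i\ne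 i^*}\Delta_i$. The parameter $\alpha>2$ satisfies $\xi\eta(1-\eta)\le\alpha<\xi(1-\eta)$. Algorithm: pull each arm once, then at timestep $t$ pull $\arg\min_i\{\hat\rho_{i,T_i(t-1)}-b_{t,T_i(t-1)}\}$ with $b_{t,s}=\theta^{1/\xi}t^{\alpha/\xi}/s^{1-\eta}$, where $T_i(n)$ is the number of pulls of arm $i$ during timesteps $1,\dots,n$. $\bar\rho_n=\frac1n\sum_iT_i(n)\hat\rho_{i,T_i(n)}$. $A(t)=\big\lceil\big(\frac{2}{\Delta_{\min}}\theta^{1/\xi}t^{\alpha/\xi}\big)^{1/(1-\eta)}\big\rceil$ and $N_p=\min\{t\in\mathbb{N}:t\ge A(t)\}$. *)

theory Defs
  imports "HOL-Probability.Probability"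
begin

text \<open>Arms are indexed 0,...,K-1; c i t w is the cost observed at the t-th pull
 (t >= 1) of arm i in outcome w.  The policy I t w is the arm pulled at timestep t.\<close>

definition rho_hat :: "real \<Rightarrow> (nat \<Rightarrow> nat \<Rightarrow> 'a \<Rightarrow> real) \<Rightarrow> nat \<Rightarrow> nat \<Rightarrow> 'a \<Rightarrow> real" where
  "rho_hat \<beta> c i n w = (1 / \<beta>) * ln ((1 / real n) * (\<Sum>t=1..n. exp (\<beta> * c i t w)))"

definition bonus :: "real \<Rightarrow> real \<Rightarrow> real \<Rightarrow> real \<Rightarrow> nat \<Rightarrow> nat \<Rightarrow> real" where
  "bonus \<theta> \<xi> \<alpha> \<eta> t s = \<theta> powr (1 / \<xi>) * real t powr (\<alpha> / \<xi>) / real s powr (1 - \<eta>)"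

definition pull_count :: "(nat \<Rightarrow> 'a \<Rightarrow> nat) \<Rightarrow> nat \<Rightarrow> nat \<Rightarrow> 'a \<Rightarrow> nat" where
  "pull_count I i n w = card {t \<in> {1..n}. I t w = i}"

definition rho_bar :: "real \<Rightarrow> (nat \<Rightarrow> nat \<Rightarrow> 'a \<Rightarrow> real) \<Rightarrow> nat \<Rightarrow> (nat \<Rightarrow> 'a \<Rightarrow> nat) \<Rightarrow> nat \<Rightarrow> 'a \<Rightarrow> real" where
  "rho_bar \<beta> c K I n w =
     (1 / real n) * (\<Sum>i<K. real (pull_count I i n w) * rho_hat \<beta> c i (pull_count I i n w) w)"

definition A_fun :: "real \<Rightarrow> real \<Rightarrow> real \<Rightarrow> real \<Rightarrow> real \<Rightarrow> nat \<Rightarrow> nat" where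
  "A_fun \<Delta> \<theta> \<xi> \<alpha> \<eta> t =
     nat \<lceil>((2 / \<Delta>) * \<theta> powr (1 / \<xi>) * real t powr (\<alpha> / \<xi>)) powr (1 / (1 - \<eta>))\<rceil>"

definition N_p :: "real \<Rightarrow> real \<Rightarrow> real \<Rightarrow> real \<Rightarrow> real \<Rightarrow> nat" where
  "N_p \<Delta> \<theta> \<xi> \<alpha> \<eta> = (LEAST t. 1 \<le> t \<and> A_fun \<Delta> \<theta> \<xi> \<alpha> \<eta> t \<le> t)"

end

theory Submission
  imports Defs
begin

text \<open>
  Since m rho_hat(i, m) changes by at most R + (exp(2\<beta>R) - 1)/\<beta>
  per additional sample, on the event that no suboptimal arm was pulled more than
  a = (3 + A(n)) x times, n rho_bar(n) is within (K - 1) a (2R + (exp(2\<beta>R) - 1)/\<beta>) of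
  n rho_hat(i*, n), whose deviation the concentration hypothesis bounds by \<theta>/x^\<xi>.
  A suboptimal arm pulled more than a times had more than A(n) samples at its last pull,
  so its bonus was then below \<Delta>/2, and the index rule forces its own estimate or that of
  the optimal arm to be off by the respective bonus. At the deviation level
  \<theta>^(1/\<xi>) y^(\<alpha>/\<xi>) the concentration hypothesis gives probability y^(-\<alpha>); summing over
  the possible sample sizes and comparing with the integral of y^(-\<alpha>) bounds the
  probability of overpulling an arm by 2 a^(1-\<alpha>)/(\<alpha> - 1).
\<close>

section \<open>Power sums and a logarithmic inequality\<close>

lemma powr_minus_le_diff_powr:
  fixes y \<alpha> :: real
  assumes "1 < y" "1 < \<alpha>"
  shows "y powr - \<alpha> \<le> ((y - 1) powr (1 - \<alpha>) - y powr (1 - \<alpha>)) / (\<alpha> - 1)"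
proof -
  have "\<exists>z. y - 1 < z \<and> z < y \<and>
      y powr (1 - \<alpha>) - (y - 1) powr (1 - \<alpha>) = (y - (y - 1)) * ((1 - \<alpha>) * z powr (1 - \<alpha> - 1))"
  proof (intro MVT2)
    fix u assume "y - 1 \<le> u" "u \<le> y"
    then show "((\<lambda>z. z powr (1 - \<alpha>)) has_real_derivative (1 - \<alpha>) * u powr (1 - \<alpha> - 1)) (at u)"
      using assms by (intro has_real_derivative_powr) auto
  qed simp
  then obtain z where z: "y - 1 < z" "z < y"
    and mvt: "y powr (1 - \<alpha>) - (y - 1) powr (1 - \<alpha>) = (1 - \<alpha>) * z powr - \<alpha>"
    by auto
  have "y powr - \<alpha> \<le> z powr - \<alpha>"
    using z assms by (intro powr_mono2') auto
  also have "z powr - \<alpha> = ((y - 1) powr (1 - \<alpha>) - y powr (1 - \<alpha>)) / (\<alpha> - 1)"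
    using mvt assms by (simp add: field_simps)
  finally show ?thesis .
qed

lemma sum_powr_minus_le:
  fixes c \<alpha> :: real
  assumes "1 < real m + c" "1 < \<alpha>"
  shows "(\<Sum>s\<in>{m..<N}. (real s + c) powr - \<alpha>) \<le> (real m + c - 1) powr (1 - \<alpha>) / (\<alpha> - 1)"
proof (cases "m \<le> N")
  case True
  then have "(\<Sum>s\<in>{m..<N}. (real s + c) powr - \<alpha>)
      \<le> ((real m + c - 1) powr (1 - \<alpha>) - (real N + c - 1) powr (1 - \<alpha>)) / (\<alpha> - 1)"
  proof (induction N rule: dec_induct)
    case (step N)
    have "(real N + c) powr - \<alpha> \<le> ((real N + c - 1) powr (1 - \<alpha>) - (real N + c) powr (1 - \<alpha>)) / (\<alpha> - 1)"
      using step.hyps assms by (intro powr_minus_le_diff_powr) auto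
    with step.IH step.hyps show ?case
      by (simp add: diff_divide_distrib algebra_simps)
  qed simp
  also have "\<dots> \<le> (real m + c - 1) powr (1 - \<alpha>) / (\<alpha> - 1)"
    using assms by (intro divide_right_mono) auto
  finally show ?thesis .
qed (use assms in auto)

lemma abs_mult_ln_mean_update_le:
  fixes m p a E :: real
  assumes "0 < p" "0 < a" "0 \<le> m" "a / p \<le> E" "p / a \<le> E"
  shows "\<bar>m * (ln ((m * p + a) / (m + 1)) - ln p)\<bar> \<le> E - 1"
proof -
  define q where "q = (m * p + a) / (m + 1)"
  have pos: "0 < m + 1" "0 < m * p + a"
    using assms by (simp_all add: add_nonneg_pos)
  then have q: "0 < q" and nz: "m + 1 \<noteq> 0" "m * p + a \<noteq> 0"
    by (simp_all add: q_def)
  have "1 \<le> a / p \<or> 1 \<le> p / a"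
    using assms by (auto simp: le_divide_eq)
  then have E: "0 \<le> E - 1"
    using assms by linarith
  have weighted: "f * d \<le> E - 1" if "0 \<le> f" "f \<le> 1" "d \<le> E - 1" for f d
    using that E by (cases "0 \<le> d") (auto intro: order_trans[OF mult_left_le_one_le] order_trans[OF mult_nonneg_nonpos])
  have "m * (ln q - ln p) \<le> m * (q / p - 1)"
    using ln_le_minus_one[of "q / p"] q assms by (intro mult_left_mono) (auto simp: ln_div)
  also have "\<dots> = m / (m + 1) * (a / p - 1)"
    using assms nz by (simp add: q_def divide_simps) (simp add: algebra_simps)
  also have "\<dots> \<le> E - 1"
    using assms pos by (intro weighted) auto
  finally have upper: "m * (ln q - ln p) \<le> E - 1" .
  have "m * (ln p - ln q) \<le> m * (p / q - 1)"
    using ln_le_minus_one[of "p / q"] q assms by (intro mult_left_mono) (auto simp: ln_div)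
  also have "\<dots> = m * a / (m * p + a) * (p / a - 1)"
    using assms nz by (simp add: q_def divide_simps) (simp add: algebra_simps)
  also have "\<dots> \<le> E - 1"
  proof (cases "a \<le> p")
    case True
    then have "m * a \<le> m * p + a"
      using assms by (smt (verit) mult_left_mono)
    then show ?thesis
      using assms pos by (intro weighted) auto
  next
    case False
    then have "m * a / (m * p + a) * (p / a - 1) \<le> 0"
      using assms pos by (intro mult_nonneg_nonpos) auto
    then show ?thesis
      using E by linarith
  qed
  finally have lower: "m * (ln p - ln q) \<le> E - 1" .
  show ?thesis
    using upper lower by (simp add: q_def abs_le_iff algebra_simps)
qed

section \<open>Entropic means\<close>

definition entropic_mean :: "real \<Rightarrow> (nat \<Rightarrow> real) \<Rightarrow> nat \<Rightarrow> real" where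
  "entropic_mean \<beta> x m = ln ((1 / real m) * (\<Sum>t=1..m. exp (\<beta> * x t))) / \<beta>"

lemma rho_hat_eq_entropic_mean: "rho_hat \<beta> c i m w = entropic_mean \<beta> (\<lambda>t. c i t w) m"
  by (simp add: rho_hat_def entropic_mean_def)

lemma mean_exp_bounds:
  fixes x :: "nat \<Rightarrow> real"
  assumes "1 \<le> m" "0 < \<beta>" "\<And>t. \<bar>x t\<bar> \<le> R"
  shows "exp (- (\<beta> * R)) \<le> (1 / real m) * (\<Sum>t=1..m. exp (\<beta> * x t))"
    and "(1 / real m) * (\<Sum>t=1..m. exp (\<beta> * x t)) \<le> exp (\<beta> * R)"
proof -
  have "\<beta> * - R \<le> \<beta> * x t" "\<beta> * x t \<le> \<beta> * R" for t
    using assms(2) assms(3)[of t] by (intro mult_left_mono; simp add: abs_le_iff)+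
  then have "real m * exp (- (\<beta> * R)) \<le> (\<Sum>t=1..m. exp (\<beta> * x t))"
    "(\<Sum>t=1..m. exp (\<beta> * x t)) \<le> real m * exp (\<beta> * R)"
    using sum_bounded_below[of "{1..m}" "exp (- (\<beta> * R))"] sum_bounded_above[of "{1..m}" _ "exp (\<beta> * R)"]
    by auto
  then show "exp (- (\<beta> * R)) \<le> (1 / real m) * (\<Sum>t=1..m. exp (\<beta> * x t))"
    "(1 / real m) * (\<Sum>t=1..m. exp (\<beta> * x t)) \<le> exp (\<beta> * R)"
    using assms(1) by (simp_all add: field_simps)
qed

lemma abs_ln_mean_exp_le:
  fixes x :: "nat \<Rightarrow> real"
  assumes "1 \<le> m" "0 < \<beta>" "\<And>t. \<bar>x t\<bar> \<le> R"
  shows "\<bar>ln ((1 / real m) * (\<Sum>t=1..m. exp (\<beta> * x t)))\<bar> \<le> \<beta> * R"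
proof -
  define P where "P = (1 / real m) * (\<Sum>t=1..m. exp (\<beta> * x t))"
  have P: "exp (- (\<beta> * R)) \<le> P" "P \<le> exp (\<beta> * R)"
    using mean_exp_bounds[OF assms] by (simp_all add: P_def)
  then have "0 < P"
    by (meson exp_gt_zero less_le_trans)
  then have "- (\<beta> * R) \<le> ln P" "ln P \<le> \<beta> * R"
    using P by (simp_all add: ln_ge_iff ln_le_cancel_iff[symmetric, of P "exp _"])
  then show ?thesis
    unfolding P_def[symmetric] by (simp add: abs_le_iff)
qed

lemma abs_entropic_mean_le:
  fixes x :: "nat \<Rightarrow> real"
  assumes "1 \<le> m" "0 < \<beta>" "\<And>t. \<bar>x t\<bar> \<le> R"
  shows "\<bar>entropic_mean \<beta> x m\<bar> \<le> R"
  using abs_ln_mean_exp_le[OF assms] assms(2)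
  by (simp add: entropic_mean_def abs_le_iff field_simps)

lemma abs_entropic_mean_increment_le:
  fixes x :: "nat \<Rightarrow> real"
  assumes \<beta>: "0 < \<beta>" and x: "\<And>t. \<bar>x t\<bar> \<le> R"
  shows "\<bar>real (Suc m) * entropic_mean \<beta> x (Suc m) - real m * entropic_mean \<beta> x m\<bar>
    \<le> R + (exp (2 * \<beta> * R) - 1) / \<beta>"
proof -
  have "0 \<le> R"
    using x[of 0] by simp
  then have gap: "0 \<le> (exp (2 * \<beta> * R) - 1) / \<beta>"
    using \<beta> by simp
  show ?thesis
  proof (cases "m = 0")
    case True
    have "entropic_mean \<beta> x 1 = x 1"
      using \<beta> by (simp add: entropic_mean_def)
    with True x[of 1] gap show ?thesis
      by simp
  next
    case False
    define p where "p = (1 / real m) * (\<Sum>t=1..m. exp (\<beta> * x t))"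
    define q where "q = (1 / real (Suc m)) * (\<Sum>t=1..Suc m. exp (\<beta> * x t))"
    define a where "a = exp (\<beta> * x (Suc m))"
    have p: "exp (- (\<beta> * R)) \<le> p" "p \<le> exp (\<beta> * R)"
      using mean_exp_bounds[OF _ \<beta> x] False by (simp_all add: p_def)
    have a: "exp (- (\<beta> * R)) \<le> a" "a \<le> exp (\<beta> * R)"
      using mean_exp_bounds[OF _ \<beta> x, of 1] by (simp_all add: a_def)
    have q_eq: "q = (real m * p + a) / (real m + 1)"
      using False by (simp add: q_def p_def a_def add_ac)
    have E: "exp (\<beta> * R) / exp (- (\<beta> * R)) = exp (2 * \<beta> * R)"
      by (simp add: exp_diff[symmetric])
    have "a / p \<le> exp (2 * \<beta> * R)" "p / a \<le> exp (2 * \<beta> * R)"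
      using p a unfolding E[symmetric] by (auto intro!: frac_le)
    then have "\<bar>real m * (ln q - ln p)\<bar> \<le> exp (2 * \<beta> * R) - 1"
      unfolding q_eq using p a by (intro abs_mult_ln_mean_update_le) (auto intro: less_le_trans[OF exp_gt_zero])
    moreover have "\<bar>ln q\<bar> \<le> \<beta> * R"
      unfolding q_def by (rule abs_ln_mean_exp_le[OF _ \<beta> x]) simp
    ultimately have "\<bar>ln q + real m * (ln q - ln p)\<bar> / \<beta> \<le> (\<beta> * R + (exp (2 * \<beta> * R) - 1)) / \<beta>"
      using \<beta> by (intro divide_right_mono) (auto intro: order_trans[OF abs_triangle_ineq])
    moreover have "entropic_mean \<beta> x (Suc m) = ln q / \<beta>" "entropic_mean \<beta> x m = ln p / \<beta>"
      by (simp_all add: entropic_mean_def p_def q_def)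
    ultimately show ?thesis
      using \<beta> by (simp add: abs_div_pos add_divide_distrib diff_divide_distrib algebra_simps)
  qed
qed

lemma abs_entropic_mean_diff_le:
  fixes x :: "nat \<Rightarrow> real"
  assumes "0 < \<beta>" "\<And>t. \<bar>x t\<bar> \<le> R" "m \<le> n"
  shows "\<bar>real n * entropic_mean \<beta> x n - real m * entropic_mean \<beta> x m\<bar>
    \<le> real (n - m) * (R + (exp (2 * \<beta> * R) - 1) / \<beta>)"
  using assms(3)
proof (induction n rule: dec_induct)
  case (step k)
  let ?L = "R + (exp (2 * \<beta> * R) - 1) / \<beta>"
  have "\<bar>real (Suc k) * entropic_mean \<beta> x (Suc k) - real m * entropic_mean \<beta> x m\<bar>
      \<le> \<bar>real (Suc k) * entropic_mean \<beta> x (Suc k) - real k * entropic_mean \<beta> x k\<bar>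
        + \<bar>real k * entropic_mean \<beta> x k - real m * entropic_mean \<beta> x m\<bar>"
    by linarith
  also have "\<dots> \<le> ?L + real (k - m) * ?L"
    using abs_entropic_mean_increment_le[where x = x, OF assms(1,2)] step.IH by (rule add_mono)
  also have "\<dots> = real (Suc k - m) * ?L"
    using step.hyps by (simp add: Suc_diff_le distrib_right)
  finally show ?case .
qed simp

section \<open>Pull counts\<close>

lemma pull_count_0 [simp]: "pull_count I i 0 w = 0"
  by (simp add: pull_count_def)

lemma pull_count_Suc:
  "pull_count I i (Suc n) w = pull_count I i n w + (if I (Suc n) w = i then 1 else 0)"
proof -
  have "{t \<in> {1..Suc n}. I t w = i} = {t \<in> {1..n}. I t w = i} \<union> (if I (Suc n) w = i then {Suc n} else {})"
    by (auto simp: le_Suc_eq)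
  then show ?thesis
    by (simp add: pull_count_def)
qed

lemma pull_count_le: "pull_count I i n w \<le> n"
  by (induction n) (auto simp: pull_count_Suc)

lemma pull_count_mono: "m \<le> n \<Longrightarrow> pull_count I i m w \<le> pull_count I i n w"
  by (induction n rule: dec_induct) (auto simp: pull_count_Suc intro: le_trans)

lemma pull_count_add_le: "i \<noteq> j \<Longrightarrow> pull_count I i n w + pull_count I j n w \<le> n"
  by (induction n) (auto simp: pull_count_Suc)

lemma sum_pull_count: "(\<And>t. I t w < K) \<Longrightarrow> (\<Sum>i<K. pull_count I i n w) = n"
  by (induction n) (simp_all add: pull_count_Suc sum.distrib)

lemma last_pull_exists:
  assumes "1 \<le> pull_count I i n w"
  obtains t where "1 \<le> t" "t \<le> n" "I t w = i" "Suc (pull_count I i (t - 1) w) = pull_count I i n w"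
  using assms
proof (induction n)
  case (Suc n)
  show ?case
  proof (cases "I (Suc n) w = i")
    case True
    then show ?thesis
      by (intro Suc.prems(1)[of "Suc n"]) (simp_all add: pull_count_Suc)
  next
    case False
    then show ?thesis
      using Suc by (simp add: pull_count_Suc)
  qed
qed simp

lemma measurable_pull_count [measurable]:
  assumes [measurable]: "\<And>t. I t \<in> measurable M (count_space UNIV)"
  shows "(\<lambda>w. pull_count I i n w) \<in> measurable M (count_space UNIV)"
proof -
  have "(\<lambda>w. pull_count I i n w) = (\<lambda>w. \<Sum>t=1..n. if I t w = i then 1 else 0)"
    by (simp add: pull_count_def sum.If_cases Int_def conj_commute)
  then show ?thesis
    by simp
qed

lemma abs_rho_bar_sub_rho_hat_le:
  assumes \<beta>: "0 < \<beta>" and c: "\<And>i t. \<bar>c i t w\<bar> \<le> R"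
    and I: "\<And>t. I t w < K" and j: "j < K"
  shows "\<bar>real n * rho_bar \<beta> c K I n w - real n * rho_hat \<beta> c j n w\<bar>
    \<le> (2 * R + (exp (2 * \<beta> * R) - 1) / \<beta>) * (\<Sum>i\<in>{..<K} - {j}. real (pull_count I i n w))"
proof -
  define T where "T i = pull_count I i n w" for i
  define g where "g i = real (T i) * rho_hat \<beta> c i (T i) w" for i
  define L where "L = R + (exp (2 * \<beta> * R) - 1) / \<beta>"
  have "0 \<le> R"
    using c[of 0 0] by simp
  have rho_bar: "real n * rho_bar \<beta> c K I n w = g j + (\<Sum>i\<in>{..<K} - {j}. g i)"
  proof -
    have "real n * rho_bar \<beta> c K I n w = (\<Sum>i<K. g i)"
      by (cases "n = 0") (simp_all add: rho_bar_def g_def T_def)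
    then show ?thesis
      using j by (simp add: sum.remove)
  qed
  have "real n = (\<Sum>i<K. real (T i))"
    using sum_pull_count[of I w K n, OF I] by (simp add: T_def flip: of_nat_sum)
  then have n: "real (n - T j) = (\<Sum>i\<in>{..<K} - {j}. real (T i))"
    using j pull_count_le[of I j n w] by (simp add: sum.remove T_def)
  have g: "\<bar>g i\<bar> \<le> R * real (T i)" for i
  proof (cases "T i = 0")
    case False
    then have "\<bar>rho_hat \<beta> c i (T i) w\<bar> \<le> R"
      unfolding rho_hat_eq_entropic_mean using \<beta> c by (intro abs_entropic_mean_le) auto
    then show ?thesis
      by (simp add: g_def abs_mult mult.commute[of R] mult_left_mono)
  qed (simp add: g_def)
  have "\<bar>real n * rho_hat \<beta> c j n w - g j\<bar> \<le> real (n - T j) * L"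
    unfolding g_def rho_hat_eq_entropic_mean L_def T_def
    using \<beta> c pull_count_le by (intro abs_entropic_mean_diff_le) auto
  then have "\<bar>real n * rho_bar \<beta> c K I n w - real n * rho_hat \<beta> c j n w\<bar>
      \<le> (\<Sum>i\<in>{..<K} - {j}. \<bar>g i\<bar>) + (\<Sum>i\<in>{..<K} - {j}. real (T i)) * L"
    unfolding rho_bar n using sum_abs[of g "{..<K} - {j}"] by linarith
  also have "\<dots> \<le> (\<Sum>i\<in>{..<K} - {j}. R * real (T i)) + (\<Sum>i\<in>{..<K} - {j}. real (T i)) * L"
    using g by (intro add_mono sum_mono) auto
  also have "\<dots> = (2 * R + (exp (2 * \<beta> * R) - 1) / \<beta>) * (\<Sum>i\<in>{..<K} - {j}. real (T i))"
    by (simp add: L_def sum_distrib_left[symmetric] algebra_simps)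
  finally show ?thesis
    by (simp add: T_def)
qed

section \<open>Deviation levels and the bonus\<close>

definition deviation_level :: "real \<Rightarrow> real \<Rightarrow> real \<Rightarrow> real \<Rightarrow> real" where
  "deviation_level \<theta> \<xi> \<alpha> y = \<theta> powr (1 / \<xi>) * y powr (\<alpha> / \<xi>)"

lemma bonus_eq_deviation_level:
  "bonus \<theta> \<xi> \<alpha> \<eta> t s = deviation_level \<theta> \<xi> \<alpha> (real t) / real s powr (1 - \<eta>)"
  by (simp add: bonus_def deviation_level_def)

lemma of_nat_mult_bonus:
  assumes "1 \<le> s"
  shows "real s * bonus \<theta> \<xi> \<alpha> \<eta> t s = real s powr \<eta> * deviation_level \<theta> \<xi> \<alpha> (real t)"
proof -
  have "real s * bonus \<theta> \<xi> \<alpha> \<eta> t s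
      = real s powr \<eta> * real s powr (1 - \<eta>) * (deviation_level \<theta> \<xi> \<alpha> (real t) / real s powr (1 - \<eta>))"
    using assms by (simp add: bonus_eq_deviation_level flip: powr_add)
  then show ?thesis
    using assms by simp
qed

lemma one_le_deviation_level:
  assumes "1 \<le> \<theta>" "1 \<le> y" "0 < \<xi>" "0 \<le> \<alpha>"
  shows "1 \<le> deviation_level \<theta> \<xi> \<alpha> y"
proof -
  have "1 \<le> \<theta> powr (1 / \<xi>)" "1 \<le> y powr (\<alpha> / \<xi>)"
    using assms by (simp_all add: ge_one_powr_ge_zero)
  then show ?thesis
    unfolding deviation_level_def by (metis mult_mono' mult_1 zero_le_one)
qed

lemma deviation_level_mono:
  assumes "0 \<le> y" "y \<le> y'" "0 \<le> \<xi>" "0 \<le> \<alpha>"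
  shows "deviation_level \<theta> \<xi> \<alpha> y \<le> deviation_level \<theta> \<xi> \<alpha> y'"
  unfolding deviation_level_def using assms by (intro mult_left_mono powr_mono2) auto

lemma tail_at_deviation_level:
  assumes "0 < \<theta>" "0 < y" "0 < \<xi>"
  shows "\<theta> / deviation_level \<theta> \<xi> \<alpha> y powr \<xi> = y powr - \<alpha>"
  using assms by (simp add: deviation_level_def powr_mult powr_powr powr_minus divide_simps)

lemma bonus_le_half_gap:
  assumes "0 < \<Delta>" "0 < \<theta>" "0 < \<xi>" "0 \<le> \<alpha>" "\<eta> < 1"
    and "0 < t" "t \<le> n" "A_fun \<Delta> \<theta> \<xi> \<alpha> \<eta> n \<le> s"
  shows "bonus \<theta> \<xi> \<alpha> \<eta> t s \<le> \<Delta> / 2"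
proof -
  define Y where "Y = 2 / \<Delta> * deviation_level \<theta> \<xi> \<alpha> (real n)"
  have Y: "0 < Y"
    using assms by (simp add: Y_def deviation_level_def)
  have "Y = (Y powr (1 / (1 - \<eta>))) powr (1 - \<eta>)"
    using Y assms by (simp add: powr_powr)
  also have "\<dots> \<le> real s powr (1 - \<eta>)"
  proof (intro powr_mono2)
    show "Y powr (1 / (1 - \<eta>)) \<le> real s"
      using assms(8) unfolding A_fun_def Y_def deviation_level_def
      by (simp add: mult.assoc)
  qed (use assms in auto)
  finally have "Y \<le> real s powr (1 - \<eta>)" .
  then have "bonus \<theta> \<xi> \<alpha> \<eta> t s \<le> deviation_level \<theta> \<xi> \<alpha> (real n) / Y"
    unfolding bonus_eq_deviation_level using Y assms
    by (intro frac_le deviation_level_mono) (auto simp: deviation_level_def)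
  also have "\<dots> = \<Delta> / 2"
    using assms by (simp add: Y_def deviation_level_def)
  finally show ?thesis .
qed

lemma N_p_ge_one:
  assumes "0 < \<Delta>" "0 < \<theta>" "0 < \<xi>" "0 \<le> \<alpha>" "\<alpha> < \<xi> * (1 - \<eta>)"
  shows "1 \<le> N_p \<Delta> \<theta> \<xi> \<alpha> \<eta>"
proof -
  define p where "p = 1 / (1 - \<eta>)"
  define \<gamma> where "\<gamma> = \<alpha> / \<xi> * p"
  define C where "C = (2 / \<Delta> * \<theta> powr (1 / \<xi>)) powr p"
  have \<eta>: "\<eta> < 1"
    using assms by (smt (verit) mult_nonneg_nonpos)
  have p: "0 < p" and C: "0 < C"
    using assms \<eta> by (simp_all add: p_def C_def)
  have \<gamma>: "0 \<le> \<gamma>" "\<gamma> < 1"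
    using assms \<eta> by (simp_all add: \<gamma>_def p_def field_simps)
  \<comment> \<open>A(t) is about C t powr \<gamma> with \<gamma> < 1, so it is at most t once t is large.\<close>
  define t where "t = nat \<lceil>C powr (1 / (1 - \<gamma>))\<rceil> + 1"
  have t: "1 \<le> t" "C powr (1 / (1 - \<gamma>)) \<le> real t"
    unfolding t_def by linarith+
  have "C = (C powr (1 / (1 - \<gamma>))) powr (1 - \<gamma>)"
    using C \<gamma> by (simp add: powr_powr)
  also have "\<dots> \<le> real t powr (1 - \<gamma>)"
    using t \<gamma> C by (intro powr_mono2) auto
  finally have Ct: "C \<le> real t powr (1 - \<gamma>)" .
  have "(2 / \<Delta> * \<theta> powr (1 / \<xi>) * real t powr (\<alpha> / \<xi>)) powr p = C * real t powr \<gamma>"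
    using assms t unfolding C_def \<gamma>_def
    by (subst powr_mult) (simp_all add: powr_powr)
  also have "\<dots> \<le> real t powr (1 - \<gamma>) * real t powr \<gamma>"
    using Ct by (intro mult_right_mono) auto
  also have "\<dots> = real t"
    using t by (simp flip: powr_add)
  finally have "A_fun \<Delta> \<theta> \<xi> \<alpha> \<eta> t \<le> t"
    by (simp add: A_fun_def p_def)
  with t(1) show ?thesis
    unfolding N_p_def by (metis (mono_tags, lifting) LeastI)
qed

section \<open>The risk-averse UCB policy\<close>

locale risk_averse_ucb = prob_space M
  for M :: "'a measure" +
  fixes c :: "nat \<Rightarrow> nat \<Rightarrow> 'a \<Rightarrow> real" and I :: "nat \<Rightarrow> 'a \<Rightarrow> nat" and K :: nat
    and \<mu> :: "nat \<Rightarrow> real" and R \<beta> \<theta> \<xi> \<alpha> \<eta> :: real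
  assumes c_meas: "\<And>i t. c i t \<in> borel_measurable M"
    and c_bound: "\<And>i t w. w \<in> space M \<Longrightarrow> \<bar>c i t w\<bar> \<le> R"
    and beta_pos: "0 < \<beta>"
    and I_meas: "\<And>t. I t \<in> measurable M (count_space UNIV)"
    and I_range: "\<And>t w. w \<in> space M \<Longrightarrow> I t w < K"
    and I_init: "\<And>i w. w \<in> space M \<Longrightarrow> i < K \<Longrightarrow> pull_count I i K w = 1"
    and I_argmin: "\<And>t w j. w \<in> space M \<Longrightarrow> K < t \<Longrightarrow> j < K \<Longrightarrow>
        rho_hat \<beta> c (I t w) (pull_count I (I t w) (t - 1) w) w
          - bonus \<theta> \<xi> \<alpha> \<eta> t (pull_count I (I t w) (t - 1) w)
        \<le> rho_hat \<beta> c j (pull_count I j (t - 1) w) w - bonus \<theta> \<xi> \<alpha> \<eta> t (pull_count I j (t - 1) w)"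
    and conc_up: "\<And>i m z. i < K \<Longrightarrow> 1 \<le> m \<Longrightarrow> 1 \<le> z \<Longrightarrow>
        measure M {w \<in> space M. real m * rho_hat \<beta> c i m w - real m * \<mu> i \<ge> real m powr \<eta> * z}
          \<le> \<theta> / z powr \<xi>"
    and conc_low: "\<And>i m z. i < K \<Longrightarrow> 1 \<le> m \<Longrightarrow> 1 \<le> z \<Longrightarrow>
        measure M {w \<in> space M. real m * rho_hat \<beta> c i m w - real m * \<mu> i \<le> - (real m powr \<eta> * z)}
          \<le> \<theta> / z powr \<xi>"
    and theta: "1 \<le> \<theta>" and xi: "0 < \<xi>" and alpha: "1 < \<alpha>" and eta: "\<eta> < 1"
begin

definition lower_deviation :: "nat \<Rightarrow> nat \<Rightarrow> real \<Rightarrow> 'a set" where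
  "lower_deviation i s y = {w \<in> space M.
     real s * rho_hat \<beta> c i s w - real s * \<mu> i \<le> - (real s powr \<eta> * deviation_level \<theta> \<xi> \<alpha> y)}"

definition upper_deviation :: "nat \<Rightarrow> nat \<Rightarrow> real \<Rightarrow> 'a set" where
  "upper_deviation i s y = {w \<in> space M.
     real s * rho_hat \<beta> c i s w - real s * \<mu> i \<ge> real s powr \<eta> * deviation_level \<theta> \<xi> \<alpha> y}"

lemma measurable_rho_hat [measurable]: "rho_hat \<beta> c i m \<in> borel_measurable M"
  unfolding rho_hat_def using c_meas by measurable

lemma sets_lower_deviation [measurable]: "lower_deviation i s y \<in> sets M"
  unfolding lower_deviation_def by measurable

lemma sets_upper_deviation [measurable]: "upper_deviation i s y \<in> sets M"
  unfolding upper_deviation_def by measurable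

lemma measure_lower_deviation_le:
  assumes "i < K" "1 \<le> s" "1 \<le> y"
  shows "measure M (lower_deviation i s y) \<le> y powr - \<alpha>"
proof -
  have "1 \<le> deviation_level \<theta> \<xi> \<alpha> y"
    using assms theta xi alpha by (intro one_le_deviation_level) auto
  then have "measure M (lower_deviation i s y) \<le> \<theta> / deviation_level \<theta> \<xi> \<alpha> y powr \<xi>"
    unfolding lower_deviation_def using assms by (intro conc_low) auto
  also have "\<dots> = y powr - \<alpha>"
    using assms theta xi by (intro tail_at_deviation_level) auto
  finally show ?thesis .
qed

lemma measure_upper_deviation_le:
  assumes "i < K" "1 \<le> s" "1 \<le> y"
  shows "measure M (upper_deviation i s y) \<le> y powr - \<alpha>"
proof -
  have "1 \<le> deviation_level \<theta> \<xi> \<alpha> y"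
    using assms theta xi alpha by (intro one_le_deviation_level) auto
  then have "measure M (upper_deviation i s y) \<le> \<theta> / deviation_level \<theta> \<xi> \<alpha> y powr \<xi>"
    unfolding upper_deviation_def using assms by (intro conc_up) auto
  also have "\<dots> = y powr - \<alpha>"
    using assms theta xi by (intro tail_at_deviation_level) auto
  finally show ?thesis .
qed

lemma lower_deviationI:
  assumes "w \<in> space M" "1 \<le> s" "rho_hat \<beta> c i s w - \<mu> i \<le> - bonus \<theta> \<xi> \<alpha> \<eta> t s"
    and "0 \<le> y" "y \<le> real t"
  shows "w \<in> lower_deviation i s y"
proof -
  have "real s * (rho_hat \<beta> c i s w - \<mu> i) \<le> - (real s * bonus \<theta> \<xi> \<alpha> \<eta> t s)"
    using assms(2,3) mult_left_mono[OF assms(3), of "real s"] by simp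
  also have "\<dots> \<le> - (real s powr \<eta> * deviation_level \<theta> \<xi> \<alpha> y)"
    unfolding of_nat_mult_bonus[OF assms(2)] using assms xi alpha
    by (intro le_imp_neg_le mult_left_mono deviation_level_mono) auto
  finally show ?thesis
    using assms(1) by (simp add: lower_deviation_def algebra_simps)
qed

lemma upper_deviationI:
  assumes "w \<in> space M" "1 \<le> s" "bonus \<theta> \<xi> \<alpha> \<eta> t s \<le> rho_hat \<beta> c i s w - \<mu> i"
    and "0 \<le> y" "y \<le> real t"
  shows "w \<in> upper_deviation i s y"
proof -
  have "real s powr \<eta> * deviation_level \<theta> \<xi> \<alpha> y \<le> real s * bonus \<theta> \<xi> \<alpha> \<eta> t s"
    unfolding of_nat_mult_bonus[OF assms(2)] using assms xi alpha
    by (intro mult_left_mono deviation_level_mono) auto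
  also have "\<dots> \<le> real s * (rho_hat \<beta> c i s w - \<mu> i)"
    using assms(2,3) by (intro mult_left_mono) auto
  finally show ?thesis
    using assms(1) by (simp add: upper_deviation_def algebra_simps)
qed

lemma suboptimal_pull_imp_estimate_error:
  assumes "w \<in> space M" "K < t" "I t w = i" "j < K" "\<Delta> \<le> \<mu> i - \<mu> j"
    and "bonus \<theta> \<xi> \<alpha> \<eta> t (pull_count I i (t - 1) w) \<le> \<Delta> / 2"
  shows "rho_hat \<beta> c i (pull_count I i (t - 1) w) w - \<mu> i < - bonus \<theta> \<xi> \<alpha> \<eta> t (pull_count I i (t - 1) w)
    \<or> bonus \<theta> \<xi> \<alpha> \<eta> t (pull_count I j (t - 1) w) \<le> rho_hat \<beta> c j (pull_count I j (t - 1) w) w - \<mu> j"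
  using I_argmin[OF assms(1,2,4)] assms(3,5,6) by auto

lemma overpull_imp_deviation:
  assumes w: "w \<in> space M" and i: "i < K" "i \<noteq> j" and j: "j < K"
    and \<Delta>: "0 < \<Delta>" "\<Delta> \<le> \<mu> i - \<mu> j"
    and a: "1 + real (A_fun \<Delta> \<theta> \<xi> \<alpha> \<eta> n) \<le> a" "a < real (pull_count I i n w)"
  shows "(\<exists>s\<in>{nat \<lfloor>a\<rfloor>..<Suc n}. w \<in> lower_deviation i s (real s + 2))
    \<or> (\<exists>s\<in>{1..<n}. w \<in> upper_deviation j s (real s + a))"
proof -
  obtain t where t: "1 \<le> t" "t \<le> n" "I t w = i"
    and last: "Suc (pull_count I i (t - 1) w) = pull_count I i n w"
    using last_pull_exists[of I i n w] a by force
  define s where "s = pull_count I i (t - 1) w"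
  define s' where "s' = pull_count I j (t - 1) w"
  have s: "a - 1 < real s" "real (A_fun \<Delta> \<theta> \<xi> \<alpha> \<eta> n) < real s"
    using a last by (simp_all add: s_def)
  have "K < t"
  proof (rule ccontr)
    assume "\<not> K < t"
    then have "pull_count I i t w \<le> 1"
      using pull_count_mono[of t K I i w] I_init[OF w i(1)] by simp
    moreover have "pull_count I i t w = Suc s"
      using t pull_count_Suc[of I i "t - 1" w] by (simp add: s_def)
    ultimately show False
      using s a by simp
  qed
  have s': "1 \<le> s'"
    using pull_count_mono[of K "t - 1" I j w] I_init[OF w j] \<open>K < t\<close> by (simp add: s'_def)
  have "s + s' \<le> t - 1"
    using pull_count_add_le[OF i(2)] by (simp add: s_def s'_def)
  \<comment> \<open>Bound the unknown time t by the sample sizes, so that the union bound runs over sample sizes only.\<close>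
  then have ranges: "real s + 2 \<le> real t" "real s' + a \<le> real t" "s < Suc n" "s' < n"
    using s s' t by linarith+
  have "bonus \<theta> \<xi> \<alpha> \<eta> t s \<le> \<Delta> / 2"
    using \<Delta> theta xi alpha eta t s by (intro bonus_le_half_gap) auto
  then consider "rho_hat \<beta> c i s w - \<mu> i < - bonus \<theta> \<xi> \<alpha> \<eta> t s"
    | "bonus \<theta> \<xi> \<alpha> \<eta> t s' \<le> rho_hat \<beta> c j s' w - \<mu> j"
    using suboptimal_pull_imp_estimate_error[OF w \<open>K < t\<close> t(3) j \<Delta>(2)] by (auto simp: s_def s'_def)
  then show ?thesis
  proof cases
    case 1
    have "w \<in> lower_deviation i s (real s + 2)"
      using w s 1 ranges by (intro lower_deviationI) auto
    moreover have "nat \<lfloor>a\<rfloor> \<le> s"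
      using s by linarith
    ultimately show ?thesis
      using ranges by auto
  next
    case 2
    have "w \<in> upper_deviation j s' (real s' + a)"
      using w s' 2 ranges a by (intro upper_deviationI) auto
    then show ?thesis
      using s' ranges by auto
  qed
qed

lemma measure_overpull_le:
  assumes i: "i < K" "i \<noteq> j" and j: "j < K" and \<Delta>: "0 < \<Delta>" "\<Delta> \<le> \<mu> i - \<mu> j"
    and a: "1 + real (A_fun \<Delta> \<theta> \<xi> \<alpha> \<eta> n) \<le> a"
  shows "measure M {w \<in> space M. a < real (pull_count I i n w)} \<le> 2 * a powr (1 - \<alpha>) / (\<alpha> - 1)"
proof -
  define s\<^sub>0 where "s\<^sub>0 = nat \<lfloor>a\<rfloor>"
  have s\<^sub>0: "1 \<le> s\<^sub>0" "a \<le> real s\<^sub>0 + 1"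
    using a by (simp_all add: s\<^sub>0_def le_nat_floor)
  have "measure M {w \<in> space M. a < real (pull_count I i n w)}
      \<le> measure M ((\<Union>s\<in>{s\<^sub>0..<Suc n}. lower_deviation i s (real s + 2)) \<union> (\<Union>s\<in>{1..<n}. upper_deviation j s (real s + a)))"
    using overpull_imp_deviation[OF _ i j \<Delta> a] by (intro finite_measure_mono) (auto simp: s\<^sub>0_def)
  also have "\<dots> \<le> (\<Sum>s\<in>{s\<^sub>0..<Suc n}. measure M (lower_deviation i s (real s + 2)))
      + (\<Sum>s\<in>{1..<n}. measure M (upper_deviation j s (real s + a)))"
    by (intro order_trans[OF measure_Un_le] add_mono measure_UNION_le) auto
  also have "\<dots> \<le> (\<Sum>s\<in>{s\<^sub>0..<Suc n}. (real s + 2) powr - \<alpha>) + (\<Sum>s\<in>{1..<n}. (real s + a) powr - \<alpha>)"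
    using i j s\<^sub>0 a
    by (intro add_mono sum_mono measure_lower_deviation_le measure_upper_deviation_le) auto
  also have "\<dots> \<le> (real s\<^sub>0 + 1) powr (1 - \<alpha>) / (\<alpha> - 1) + a powr (1 - \<alpha>) / (\<alpha> - 1)"
    using sum_powr_minus_le[of s\<^sub>0 2 \<alpha> "Suc n"] sum_powr_minus_le[of 1 a \<alpha> n] s\<^sub>0 a alpha
    by (intro add_mono) (simp_all add: add_ac)
  also have "\<dots> \<le> a powr (1 - \<alpha>) / (\<alpha> - 1) + a powr (1 - \<alpha>) / (\<alpha> - 1)"
    using s\<^sub>0 a alpha by (intro add_mono divide_right_mono powr_mono2') auto
  also have "\<dots> = 2 * a powr (1 - \<alpha>) / (\<alpha> - 1)"
    by simp
  finally show ?thesis .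
qed

lemma measure_some_overpull_le:
  assumes j: "j < K" and gap: "\<And>i. i < K \<Longrightarrow> i \<noteq> j \<Longrightarrow> \<Delta> \<le> \<mu> i - \<mu> j" and \<Delta>: "0 < \<Delta>"
    and a: "1 + real (A_fun \<Delta> \<theta> \<xi> \<alpha> \<eta> n) \<le> a"
  shows "measure M (\<Union>i\<in>{..<K} - {j}. {w \<in> space M. a < real (pull_count I i n w)})
    \<le> (real K - 1) * (2 * a powr (1 - \<alpha>) / (\<alpha> - 1))"
proof -
  have "measure M (\<Union>i\<in>{..<K} - {j}. {w \<in> space M. a < real (pull_count I i n w)})
      \<le> (\<Sum>i\<in>{..<K} - {j}. 2 * a powr (1 - \<alpha>) / (\<alpha> - 1))"
    using I_meas
    by (intro order_trans[OF measure_UNION_le] sum_mono measure_overpull_le[OF _ _ j \<Delta>])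
      (use a gap in auto)
  also have "\<dots> = (real K - 1) * (2 * a powr (1 - \<alpha>) / (\<alpha> - 1))"
    using j by simp
  finally show ?thesis .
qed

lemma abs_rho_bar_sub_rho_hat_le_few_pulls:
  assumes w: "w \<in> space M" and j: "j < K"
    and few: "\<And>i. i < K \<Longrightarrow> i \<noteq> j \<Longrightarrow> real (pull_count I i n w) \<le> a"
  shows "\<bar>real n * rho_bar \<beta> c K I n w - real n * rho_hat \<beta> c j n w\<bar>
    \<le> (2 * R + (exp (2 * \<beta> * R) - 1) / \<beta>) * ((real K - 1) * a)"
proof -
  have "0 \<le> R"
    using c_bound[OF w, of 0 0] by simp
  then have C: "0 \<le> 2 * R + (exp (2 * \<beta> * R) - 1) / \<beta>"
    using beta_pos by simp
  have "\<bar>real n * rho_bar \<beta> c K I n w - real n * rho_hat \<beta> c j n w\<bar>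
      \<le> (2 * R + (exp (2 * \<beta> * R) - 1) / \<beta>) * (\<Sum>i\<in>{..<K} - {j}. real (pull_count I i n w))"
    using w c_bound beta_pos I_range j by (intro abs_rho_bar_sub_rho_hat_le) auto
  also have "\<dots> \<le> (2 * R + (exp (2 * \<beta> * R) - 1) / \<beta>) * (real (card ({..<K} - {j})) * a)"
    using few C by (intro mult_left_mono sum_bounded_above) auto
  finally show ?thesis
    using j by simp
qed

lemma measure_rho_bar_deviation_le:
  assumes j: "j < K" and gap: "\<And>i. i < K \<Longrightarrow> i \<noteq> j \<Longrightarrow> \<Delta> \<le> \<mu> i - \<mu> j" and \<Delta>: "0 < \<Delta>"
    and n: "1 \<le> n" and x: "1 \<le> x"
  defines "A \<equiv> A_fun \<Delta> \<theta> \<xi> \<alpha> \<eta> n"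
  defines "r \<equiv> real n powr \<eta> + 2 * (R + (exp (2 * \<beta> * R) - 1) / (2 * \<beta>)) * (real K - 1) * (3 + real A)"
    and "B \<equiv> \<theta> / x powr \<xi> + 2 * (real K - 1) / ((\<alpha> - 1) * ((1 + real A) * x) powr (\<alpha> - 1))"
  shows "measure M {w \<in> space M. r * x \<le> real n * rho_bar \<beta> c K I n w - real n * \<mu> j} \<le> B"
    and "measure M {w \<in> space M. real n * rho_bar \<beta> c K I n w - real n * \<mu> j \<le> - (r * x)} \<le> B"
proof -
  define a where "a = (3 + real A) * x"
  define V where "V = (\<Union>i\<in>{..<K} - {j}. {w \<in> space M. a < real (pull_count I i n w)})"
  have a: "1 + real A \<le> a" "(1 + real A) * x \<le> a"
    using x by (simp_all add: a_def mult_right_mono order_trans[OF _ mult_left_mono[OF x]])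
  have V: "V \<in> sets M"
    unfolding V_def using I_meas by measurable
  have "measure M V \<le> (real K - 1) * (2 * a powr (1 - \<alpha>) / (\<alpha> - 1))"
    unfolding V_def using a(1) by (intro measure_some_overpull_le[OF j gap \<Delta>]) (auto simp: A_def)
  also have "\<dots> \<le> (real K - 1) * (2 * ((1 + real A) * x) powr (1 - \<alpha>) / (\<alpha> - 1))"
    using a alpha x j by (intro mult_left_mono divide_right_mono powr_mono2') auto
  also have "\<dots> = 2 * (real K - 1) / ((\<alpha> - 1) * ((1 + real A) * x) powr (\<alpha> - 1))"
    using powr_minus_divide[of "(1 + real A) * x" "\<alpha> - 1"] by (simp add: ac_simps)
  finally have measure_V: "measure M V \<le> 2 * (real K - 1) / ((\<alpha> - 1) * ((1 + real A) * x) powr (\<alpha> - 1))" .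
  have close: "\<bar>real n * rho_bar \<beta> c K I n w - real n * rho_hat \<beta> c j n w\<bar> \<le> r * x - real n powr \<eta> * x"
    if "w \<in> space M" "w \<notin> V" for w
    using abs_rho_bar_sub_rho_hat_le_few_pulls[OF that(1) j, of n a] that beta_pos
    by (force simp: V_def r_def a_def field_simps)
  have union_bound: "measure M E \<le> B"
    if "E \<subseteq> E\<^sub>0 \<union> V" "E\<^sub>0 \<in> sets M" "measure M E\<^sub>0 \<le> \<theta> / x powr \<xi>" for E E\<^sub>0
  proof -
    have "measure M E \<le> measure M E\<^sub>0 + measure M V"
      using finite_measure_mono[OF that(1)] measure_Un_le[OF that(2) V] that(2) V by auto
    then show ?thesis
      using that(3) measure_V unfolding B_def by linarith
  qed
  show "measure M {w \<in> space M. r * x \<le> real n * rho_bar \<beta> c K I n w - real n * \<mu> j} \<le> B"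
  proof (rule union_bound)
    show "measure M {w \<in> space M. real n powr \<eta> * x \<le> real n * rho_hat \<beta> c j n w - real n * \<mu> j}
        \<le> \<theta> / x powr \<xi>"
      using j n x by (intro conc_up) auto
  qed (use close in force, measurable)
  show "measure M {w \<in> space M. real n * rho_bar \<beta> c K I n w - real n * \<mu> j \<le> - (r * x)} \<le> B"
  proof (rule union_bound)
    show "measure M {w \<in> space M. real n * rho_hat \<beta> c j n w - real n * \<mu> j \<le> - (real n powr \<eta> * x)}
        \<le> \<theta> / x powr \<xi>"
      using j n x by (intro conc_low) auto
  qed (use close in force, measurable)
qed

end

theorem lemma12:
  fixes M :: "'a measure"
    and c :: "nat \<Rightarrow> nat \<Rightarrow> 'a \<Rightarrow> real"
    and I :: "nat \<Rightarrow> 'a \<Rightarrow> nat"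
    and K :: nat and R \<beta> \<theta> \<xi> \<eta> \<alpha> :: real
    and \<mu> :: "nat \<Rightarrow> real" and istar :: nat
    and n :: nat and x :: real
  assumes prob: "prob_space M"
    and K2: "2 \<le> K"
    and c_meas: "\<And>i t. c i t \<in> borel_measurable M"
    and c_bound: "\<And>i t w. w \<in> space M \<Longrightarrow> \<bar>c i t w\<bar> \<le> R"
    and beta_pos: "0 < \<beta>"
    and mu_lim: "\<And>i. i < K \<Longrightarrow>
        (\<lambda>m. integral\<^sup>L M (rho_hat \<beta> c i m)) \<longlonglongrightarrow> \<mu> i"
    and conc_up: "\<And>i m z. i < K \<Longrightarrow> 1 \<le> m \<Longrightarrow> 1 \<le> z \<Longrightarrow>
        measure M {w \<in> space M. real m * rho_hat \<beta> c i m w - real m * \<mu> i \<ge> real m powr \<eta> * z}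
          \<le> \<theta> / z powr \<xi>"
    and conc_low: "\<And>i m z. i < K \<Longrightarrow> 1 \<le> m \<Longrightarrow> 1 \<le> z \<Longrightarrow>
        measure M {w \<in> space M. real m * rho_hat \<beta> c i m w - real m * \<mu> i \<le> - (real m powr \<eta> * z)}
          \<le> \<theta> / z powr \<xi>"
    and xi: "1 < \<xi>"
    and eta: "1/2 \<le> \<eta>" "\<eta> < 1"
    and istar: "istar < K" "\<And>i. i < K \<Longrightarrow> i \<noteq> istar \<Longrightarrow> \<mu> istar < \<mu> i"
    and theta: "1 < \<theta>"
      "2 * \<theta> powr (1 / \<xi>) / Min {\<mu> i - \<mu> istar | i. i < K \<and> i \<noteq> istar} > 1"
    and alpha: "2 < \<alpha>" "\<xi> * \<eta> * (1 - \<eta>) \<le> \<alpha>" "\<alpha> < \<xi> * (1 - \<eta>)"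
    and I_meas: "\<And>t. I t \<in> measurable M (count_space UNIV)"
    and I_range: "\<And>t w. w \<in> space M \<Longrightarrow> I t w < K"
    and I_init: "\<And>i w. w \<in> space M \<Longrightarrow> i < K \<Longrightarrow> pull_count I i K w = 1"
    and I_argmin: "\<And>t w j. w \<in> space M \<Longrightarrow> K < t \<Longrightarrow> j < K \<Longrightarrow>
        rho_hat \<beta> c (I t w) (pull_count I (I t w) (t - 1) w) w
          - bonus \<theta> \<xi> \<alpha> \<eta> t (pull_count I (I t w) (t - 1) w)
        \<le> rho_hat \<beta> c j (pull_count I j (t - 1) w) w - bonus \<theta> \<xi> \<alpha> \<eta> t (pull_count I j (t - 1) w)"
    and n: "N_p (Min {\<mu> i - \<mu> istar | i. i < K \<and> i \<noteq> istar}) \<theta> \<xi> \<alpha> \<eta> \<le> n"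
    and x: "1 \<le> x"
  shows
   "let \<Delta>min = Min {\<mu> i - \<mu> istar | i. i < K \<and> i \<noteq> istar};
        An = A_fun \<Delta>min \<theta> \<xi> \<alpha> \<eta> n;
        r0 = real n powr \<eta> + 2 * (R + (exp (2 * \<beta> * R) - 1) / (2 * \<beta>)) * (real K - 1) * (3 + real An);
        bound = \<theta> / x powr \<xi> + 2 * (real K - 1) / ((\<alpha> - 1) * ((1 + real An) * x) powr (\<alpha> - 1))
    in measure M {w \<in> space M. real n * rho_bar \<beta> c K I n w - real n * \<mu> istar \<ge> r0 * x} \<le> bound
     \<and> measure M {w \<in> space M. real n * rho_bar \<beta> c K I n w - real n * \<mu> istar \<le> - (r0 * x)} \<le> bound"
proof -
  interpret ucb: risk_averse_ucb M c I K \<mu> R \<beta> \<theta> \<xi> \<alpha> \<eta>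
    using theta(1) xi alpha(1) eta(2)
    by (intro risk_averse_ucb.intro[OF prob] risk_averse_ucb_axioms.intro
        c_meas c_bound beta_pos I_meas I_range I_init I_argmin conc_up conc_low) auto
  define G where "G = {\<mu> i - \<mu> istar | i. i < K \<and> i \<noteq> istar}"
  have "(if istar = 0 then 1 else 0) < K" "(if istar = 0 then 1 else 0) \<noteq> istar"
    using K2 by auto
  then have G: "finite G" "G \<noteq> {}"
    unfolding G_def by auto
  have gap: "Min G \<le> \<mu> i - \<mu> istar" if "i < K" "i \<noteq> istar" for i
    using G that by (intro Min_le) (auto simp: G_def)
  have "Min G \<in> G"
    using G by (rule Min_in)
  then have "0 < Min G"
    using istar by (auto simp: G_def)
  moreover have "1 \<le> N_p (Min G) \<theta> \<xi> \<alpha> \<eta>"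
    using \<open>0 < Min G\<close> theta xi alpha by (intro N_p_ge_one) auto
  with n have "1 \<le> n"
    by (simp add: G_def)
  ultimately show ?thesis
    using ucb.measure_rho_bar_deviation_le[OF istar(1) gap _ _ x] unfolding Let_def G_def[symmetric] by blast
qed

end
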